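(* Let $A$ be a unique factorization domain and $R$ a subring of $A$ whose group of units equals that of $A$. Then $\operatorname{Irr}R\subset\operatorname{Irr}A$ if and only if $R$ is factorially closed in $A$, i.e. for all $x,y\in A$, $xy\in R\setminus\{0\}$ implies $x,y\in R$.
   Context: $\operatorname{Irr}R$ denotes the set of irreducible elements of a ring $R$. *)

theory Defs
  imports "HOL-Algebra.Algebra"
begin

end

theory Submission
  imports Defs
begin

text \<open>If the subring is factorially closed, an irreducible of the subring cannot split in the
  ambient ring, since both factors would lie in the subring. Conversely, call \<open>w\<close>
  good if every factorisation \<open>w = x y\<close> in the ambient ring has \<open>x, y\<close> in the subring.
  By well-founded induction on divisibility one shows that multiplying a good element by a
  nonzero \<open>r\<close> of the subring keeps it good: units of the ring lie in the subring; an
  irreducible \<open>r\<close> of the subring is irreducible, hence prime, in the factorial ring, so it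
  divides one of the two factors; and otherwise \<open>r\<close> splits inside the subring into two
  proper factors. Starting from the good element \<open>1\<close> gives factorial closedness.\<close>

definition factors_within :: "('a, 'b) ring_scheme \<Rightarrow> 'a set \<Rightarrow> 'a \<Rightarrow> bool" where
  "factors_within A S w \<longleftrightarrow> (\<forall>x \<in> carrier A. \<forall>y \<in> carrier A. x \<otimes>\<^bsub>A\<^esub> y = w \<longrightarrow> x \<in> S \<and> y \<in> S)"

locale subring_same_units = domain A for A (structure) +
  fixes S :: "'a set"
  assumes subring: "subring S A"
    and Units_eq: "Units (A\<lparr>carrier := S\<rparr>) = Units A"
begin

lemma carrier_subset: "S \<subseteq> carrier A"
  using subringE(1)[OF subring] .

lemma subring_mult_closed: "a \<in> S \<Longrightarrow> b \<in> S \<Longrightarrow> a \<otimes> b \<in> S"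
  using subringE(6)[OF subring] .

lemma Units_subset: "Units A \<subseteq> S"
  using Units_eq unfolding Units_def by auto

lemma ring_irreducible_subring_iff:
  assumes "r \<in> S"
  shows "ring_irreducible\<^bsub>A\<lparr>carrier := S\<rparr>\<^esub> r \<longleftrightarrow>
    r \<noteq> \<zero> \<and> r \<notin> Units A \<and> (\<forall>a \<in> S. \<forall>b \<in> S. r = a \<otimes> b \<longrightarrow> a \<in> Units A \<or> b \<in> Units A)"
proof -
  interpret S: domain "A\<lparr>carrier := S\<rparr>"
    using subring_is_domain[OF subring] .
  show ?thesis
    using S.ring_irreducibleE[of r] S.ring_irreducibleI[of r] assms Units_eq by auto
qed

lemma ring_irreducible_if_factorially_closed:
  assumes closed: "\<forall>x \<in> carrier A. \<forall>y \<in> carrier A. x \<otimes> y \<in> S - {\<zero>} \<longrightarrow> x \<in> S \<and> y \<in> S"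
    and "r \<in> S" and irr: "ring_irreducible\<^bsub>A\<lparr>carrier := S\<rparr>\<^esub> r"
  shows "ring_irreducible r"
proof -
  have r: "r \<noteq> \<zero>" "r \<notin> Units A"
    and split: "\<forall>a \<in> S. \<forall>b \<in> S. r = a \<otimes> b \<longrightarrow> a \<in> Units A \<or> b \<in> Units A"
    using irr ring_irreducible_subring_iff[OF \<open>r \<in> S\<close>] by auto
  show ?thesis
  proof (rule ring_irreducibleI)
    show "r \<in> carrier A - {\<zero>}" "r \<notin> Units A"
      using r \<open>r \<in> S\<close> carrier_subset by auto
    fix a b assume "a \<in> carrier A" "b \<in> carrier A" and rab: "r = a \<otimes> b"
    then have "a \<in> S \<and> b \<in> S"
      using closed \<open>r \<in> S\<close> r(1) by blast
    then show "a \<in> Units A \<or> b \<in> Units A"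
      using split rab by blast
  qed
qed

lemma factors_within_one: "factors_within A S \<one>"
  unfolding factors_within_def
proof (intro ballI impI)
  fix x y assume "x \<in> carrier A" "y \<in> carrier A" "x \<otimes> y = \<one>"
  then have "x \<in> Units A" "y \<in> Units A"
    using unit_factor[of x y] unit_factor[of y x] m_comm[of x y] by auto
  then show "x \<in> S \<and> y \<in> S"
    using Units_subset by auto
qed

lemma factors_within_Units_mult:
  assumes u: "u \<in> Units A" and w: "w \<in> carrier A" and fw: "factors_within A S w"
  shows "factors_within A S (u \<otimes> w)"
  unfolding factors_within_def
proof (intro ballI impI)
  fix x y assume x: "x \<in> carrier A" and y: "y \<in> carrier A" and xy: "x \<otimes> y = u \<otimes> w"
  have "(inv u \<otimes> x) \<otimes> y = inv u \<otimes> (u \<otimes> w)"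
    using xy u x y by (simp add: m_assoc)
  also have "\<dots> = w"
    using u w by (metis Units_closed Units_inv_closed Units_l_inv l_one m_assoc)
  finally have "(inv u \<otimes> x) \<otimes> y = w" .
  then have "inv u \<otimes> x \<in> S" "y \<in> S"
    using fw x y u unfolding factors_within_def by auto
  moreover have "x = u \<otimes> (inv u \<otimes> x)"
    using u x by (metis Units_closed Units_inv_closed Units_r_inv l_one m_assoc)
  ultimately show "x \<in> S \<and> y \<in> S"
    using subring_mult_closed u Units_subset by (metis subsetD)
qed

lemma factors_within_mult_if_divides_left:
  assumes p: "p \<in> S" "p \<noteq> \<zero>" and w: "w \<in> carrier A" and fw: "factors_within A S w"
    and x: "x \<in> carrier A" and y: "y \<in> carrier A" and xy: "x \<otimes> y = p \<otimes> w"
    and dvd: "p divides x"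
  shows "x \<in> S \<and> y \<in> S"
proof -
  obtain x' where x': "x' \<in> carrier A" "x = p \<otimes> x'"
    using dvd unfolding factor_def by auto
  have pc: "p \<in> carrier A" using p carrier_subset by auto
  have "p \<otimes> (x' \<otimes> y) = p \<otimes> w"
    using xy x' y pc by (simp add: m_assoc)
  then have "x' \<otimes> y = w"
    using m_lcancel[OF p(2) pc] x' y w by simp
  then have "x' \<in> S" "y \<in> S"
    using fw x' y unfolding factors_within_def by auto
  then show ?thesis
    using x' subring_mult_closed p by simp
qed

lemma factors_within_prime_mult:
  assumes p: "p \<in> S" "p \<noteq> \<zero>" "prime A p" and w: "w \<in> carrier A" and fw: "factors_within A S w"
  shows "factors_within A S (p \<otimes> w)"
  unfolding factors_within_def
proof (intro ballI impI)
  fix x y assume x: "x \<in> carrier A" and y: "y \<in> carrier A" and xy: "x \<otimes> y = p \<otimes> w"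
  have "p divides x \<otimes> y"
    using xy w unfolding factor_def by auto
  then consider "p divides x" | "p divides y"
    using p(3) x y unfolding prime_def by blast
  then show "x \<in> S \<and> y \<in> S"
  proof cases
    case 1 then show ?thesis
      using factors_within_mult_if_divides_left[OF p(1,2) w fw x y xy] by blast
  next
    case 2 then show ?thesis
      using factors_within_mult_if_divides_left[OF p(1,2) w fw y x] xy x y m_comm by auto
  qed
qed

end

lemma (in factorial_domain) ring_irreducible_imp_prime:
  assumes "p \<in> carrier R" "ring_irreducible p"
  shows "prime R p"
  using assms ring_irreducibleE(1,3) irreducible_prime prime_eq_prime_mult by simp

locale factorial_subring_same_units = subring_same_units + factorial_domain A
begin

lemma properfactor_mult_of_if_nonunit_cofactor:
  assumes "b \<in> carrier A - {\<zero>}" "c \<in> carrier A - {\<zero>}" "c \<notin> Units A"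
  shows "properfactor (mult_of A) b (b \<otimes> c)"
  using mult_of.properfactorI3[of "b \<otimes> c" b c] assms by simp

lemma factors_within_mult:
  assumes preserved: "\<forall>x \<in> S. ring_irreducible\<^bsub>A\<lparr>carrier := S\<rparr>\<^esub> x \<longrightarrow> ring_irreducible x"
    and "r \<in> S - {\<zero>}" "w \<in> carrier A" "factors_within A S w"
  shows "factors_within A S (r \<otimes> w)"
  using assms(2-)
proof (induction r arbitrary: w rule: wf_induct_rule[OF division_wellfounded])
  case (1 r w)
  have r: "r \<in> S" "r \<noteq> \<zero>" "r \<in> carrier A"
    using "1.prems"(1) carrier_subset by auto
  have IH: "factors_within A S (b \<otimes> v)"
    if "b \<in> S - {\<zero>}" "properfactor (mult_of A) b r" "v \<in> carrier A" "factors_within A S v" for b v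
    using "1.IH" that r carrier_subset by auto
  consider "r \<in> Units A" | "ring_irreducible\<^bsub>A\<lparr>carrier := S\<rparr>\<^esub> r"
    | b c where "b \<in> S - {\<zero>}" "c \<in> S - {\<zero>}" "b \<notin> Units A" "c \<notin> Units A" "r = b \<otimes> c"
    using ring_irreducible_subring_iff[OF r(1)] r(2) carrier_subset by (auto, metis l_null r_null subsetD)
  then show ?case
  proof cases
    case 1
    then show ?thesis
      using factors_within_Units_mult "1.prems" by blast
  next
    case 2
    then have "prime A r"
      using preserved r ring_irreducible_imp_prime by blast
    then show ?thesis
      using factors_within_prime_mult r "1.prems" by blast
  next
    case (3 b c)
    have bc: "b \<in> carrier A - {\<zero>}" "c \<in> carrier A - {\<zero>}"
      using 3 carrier_subset by auto
    have "properfactor (mult_of A) b r" "properfactor (mult_of A) c r"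
      using properfactor_mult_of_if_nonunit_cofactor[OF bc] properfactor_mult_of_if_nonunit_cofactor[OF bc(2,1)]
        3 bc m_comm by auto
    moreover have "c \<otimes> w \<in> carrier A"
      using 3 carrier_subset "1.prems" by auto
    ultimately have "factors_within A S (b \<otimes> (c \<otimes> w))"
      using IH 3 "1.prems" by blast
    then show ?thesis
      using 3(5) bc "1.prems"(2) by (simp add: m_assoc)
  qed
qed

lemma factorially_closed_if_irreducibles_preserved:
  assumes "\<forall>x \<in> S. ring_irreducible\<^bsub>A\<lparr>carrier := S\<rparr>\<^esub> x \<longrightarrow> ring_irreducible x"
  shows "\<forall>x \<in> carrier A. \<forall>y \<in> carrier A. x \<otimes> y \<in> S - {\<zero>} \<longrightarrow> x \<in> S \<and> y \<in> S"
proof (intro ballI impI)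
  fix x y assume x: "x \<in> carrier A" and y: "y \<in> carrier A" and xy: "x \<otimes> y \<in> S - {\<zero>}"
  have "factors_within A S ((x \<otimes> y) \<otimes> \<one>)"
    using factors_within_mult[OF assms xy one_closed factors_within_one] .
  then have "factors_within A S (x \<otimes> y)"
    using x y by simp
  then show "x \<in> S \<and> y \<in> S"
    using x y unfolding factors_within_def by blast
qed

end

theorem lemma3p2:
  fixes A (structure) and R :: "'a set"
  assumes "factorial_domain A"
    and "subring R A"
    and "Units (A\<lparr>carrier := R\<rparr>) = Units A"
  shows "(\<forall>x \<in> R. ring_irreducible\<^bsub>A\<lparr>carrier := R\<rparr>\<^esub> x \<longrightarrow> ring_irreducible\<^bsub>A\<^esub> x)
     \<longleftrightarrow> (\<forall>x \<in> carrier A. \<forall>y \<in> carrier A. x \<otimes> y \<in> R - {\<zero>} \<longrightarrow> x \<in> R \<and> y \<in> R)"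
proof -
  interpret factorial_subring_same_units A R
    using assms by (simp add: factorial_subring_same_units_def subring_same_units_def
        subring_same_units_axioms_def factorial_domain_def)
  show ?thesis
    using factorially_closed_if_irreducibles_preserved ring_irreducible_if_factorially_closed
    by blast
qed

end
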